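(* Let $M,N\in\mathbb{S}^{q+r}$. If there exist scalars $\alpha\in\mathbb{R}$ and $\beta>0$ such that $M-\alpha N\ge\begin{bmatrix}\beta I_q&0\\0&0\end{bmatrix}$ ( * ), then $\mathcal{Z}_r^0(N)\subseteq\mathcal{Z}_r^+(M)$. Moreover, if $N\in\boldsymbol{\Pi}_{q,r}$, $N\mid N_{22}=0$ and $M_{22}\le 0$, then $\mathcal{Z}_r^0(N)\subseteq\mathcal{Z}_r^+(M)$ if and only if there exist $\alpha\ge 0$ and $\beta>0$ such that ( * ) holds.
   Context: $\mathbb{S}^k$ denotes the real symmetric $k\times k$ matrices; for symmetric matrices, $A\ge 0$ ($A>0$) means positive semidefinite (definite), $A\le B$ means $B-A\ge0$. $A^\dagger$ is the Moore–Penrose pseudo-inverse. Any $\Pi\in\mathbb{S}^{q+r}$ (in particular $M,N$) is partitioned as $\Pi=\begin{bmatrix}\Pi_{11}&\Pi_{12}\\ \Pi_{21}&\Pi_{22}\end{bmatrix}$ with $\Pi_{11}\in\mathbb{S}^q$, $\Pi_{22}\in\mathbb{S}^r$. The generalized Schur complement is $\Pi\mid\Pi_{22}:=\Pi_{11}-\Pi_{12}\Pi_{22}^\dagger\Pi_{21}$. The set $\boldsymbol{\Pi}_{q,r}$ consists of all $\Pi\in\mathbb{S}^{q+r}$ with $\Pi_{22}\le 0$, $\Pi\mid\Pi_{22}\ge 0$ and $\ker\Pi_{22}\subseteq\ker\Pi_{12}$. Define $\mathcal{Z}_r^+(\Pi)=\{Z\in\mathbb{R}^{r\times q}:\begin{bmatrix}I_q\\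 Z\end{bmatrix}^\top\Pi\begin{bmatrix}I_q\\ Z\end{bmatrix}> 0\}$ and $\mathcal{Z}_r^0(\Pi)$ the same with $=0$. *)

theory Defs
  imports "HOL-Analysis.Analysis"
begin

text \<open>A (q+r)x(q+r) matrix has
  index type \<open>'q + 'r\<close>; rows/columns \<open>Inl i\<close> form the first block (size q),
  \<open>Inr j\<close> the second block (size r).\<close>

definition sym_mat :: "real^'n^'n \<Rightarrow> bool" where
  "sym_mat A \<longleftrightarrow> transpose A = A"

definition psd :: "real^'n^'n \<Rightarrow> bool" where
  "psd A \<longleftrightarrow> (\<forall>x. 0 \<le> x \<bullet> (A *v x))"

definition pd :: "real^'n^'n \<Rightarrow> bool" where
  "pd A \<longleftrightarrow> (\<forall>x. x \<noteq> 0 \<longrightarrow> 0 < x \<bullet> (A *v x))"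

definition loewner_le :: "real^'n^'n \<Rightarrow> real^'n^'n \<Rightarrow> bool" where
  "loewner_le A B \<longleftrightarrow> psd (B - A)"

definition pinv :: "real^'n^'m \<Rightarrow> real^'m^'n" where
  "pinv A = (THE X. A ** X ** A = A \<and> X ** A ** X = X \<and>
               transpose (A ** X) = A ** X \<and> transpose (X ** A) = X ** A)"

definition blk11 :: "real^('q::finite+'r::finite)^('q+'r) \<Rightarrow> real^'q^'q" where
  "blk11 P = (\<chi> i j. P $ Inl i $ Inl j)"
definition blk12 :: "real^('q::finite+'r::finite)^('q+'r) \<Rightarrow> real^'r^'q" where
  "blk12 P = (\<chi> i j. P $ Inl i $ Inr j)"
definition blk21 :: "real^('q::finite+'r::finite)^('q+'r) \<Rightarrow> real^'q^'r" where
  "blk21 P = (\<chi> i j. P $ Inr i $ Inl j)"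
definition blk22 :: "real^('q::finite+'r::finite)^('q+'r) \<Rightarrow> real^'r^'r" where
  "blk22 P = (\<chi> i j. P $ Inr i $ Inr j)"

definition schur :: "real^('q::finite+'r::finite)^('q+'r) \<Rightarrow> real^'q^'q" where
  "schur P = blk11 P - blk12 P ** pinv (blk22 P) ** blk21 P"

definition PiSet :: "(real^('q::finite+'r::finite)^('q+'r)) set" where
  "PiSet = {P. sym_mat P \<and> loewner_le (blk22 P) 0 \<and> loewner_le 0 (schur P) \<and>
                {x. blk22 P *v x = 0} \<subseteq> {x. blk12 P *v x = 0}}"

definition stackIZ :: "real^'q^'r \<Rightarrow> real^'q^('q+'r)" where
  "stackIZ Z = (\<chi> i j. case i of Inl a \<Rightarrow> (if a = j then 1 else 0) | Inr k \<Rightarrow> Z $ k $ j)"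

definition Zplus :: "real^('q::finite+'r::finite)^('q+'r) \<Rightarrow> (real^'q^'r) set" where
  "Zplus P = {Z. pd (transpose (stackIZ Z) ** P ** stackIZ Z)}"

definition Zzero :: "real^('q::finite+'r::finite)^('q+'r) \<Rightarrow> (real^'q^'r) set" where
  "Zzero P = {Z. transpose (stackIZ Z) ** P ** stackIZ Z = 0}"

definition betaI :: "real \<Rightarrow> real^('q::finite+'r::finite)^('q+'r)" where
  "betaI \<beta> = (\<chi> i j. case i of
       Inl a \<Rightarrow> (case j of Inl b \<Rightarrow> (if a = b then \<beta> else 0) | Inr _ \<Rightarrow> 0)
     | Inr _ \<Rightarrow> 0)"

end

theory Submission
  imports Defs
begin

text \<open>
  Sufficiency: if \<open>Z\<close> lies in \<open>Z0(N)\<close>, the vector \<open>x = [I; Z] y\<close> has \<open>x'Nx = 0\<close>, hence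
  \<open>x'Mx \<ge> \<beta> |y|^2 > 0\<close>.

  Necessity: because \<open>N | N22 = 0\<close> and \<open>ker N22 \<subseteq> ker N12\<close>, the pseudo-inverse gives
  \<open>N21 = N22 K\<close> and \<open>N = S' N22 S\<close> for the block row \<open>S = [K I]\<close>. Hence \<open>x'Nx \<le> 0\<close>, with
  equality iff \<open>Sx \<in> ker N22\<close>. Rank-one perturbations of \<open>-K\<close> lie in \<open>Z0(N)\<close>, so \<open>M\<close> is
  positive on all nonzero such \<open>x\<close> with nonzero upper block; with \<open>M22 \<le> 0\<close> this forces
  \<open>M\<close> to vanish on \<open>[0; ker N22]\<close>. On the compact set of unit vectors orthogonal to
  \<open>[0; ker N22]\<close> either \<open>x'Nx < 0\<close> or \<open>x'Mx > 0\<close>, so a finite subcover yields one \<open>\<alpha>\<close> with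
  \<open>x'(M - \<alpha>N)x > 1/\<alpha>\<close> there; homogeneity and invariance under \<open>[0; ker N22]\<close> extend
  this to \<open>M - \<alpha>N \<ge> diag(I/\<alpha>, 0)\<close>.
\<close>

section \<open>Symmetric matrices and the Moore--Penrose inverse\<close>

lemma symmetric_matrix_inner:
  fixes A :: "real^'n^'n"
  assumes "transpose A = A"
  shows "(A *v x) \<bullet> y = x \<bullet> (A *v y)"
  by (metis assms dot_lmul_matrix inner_commute transpose_matrix_vector)

lemma transpose_eq_selfI:
  fixes B :: "real^'n^'n"
  assumes "\<And>u w. u \<bullet> (B *v w) = (B *v u) \<bullet> w"
  shows "transpose B = B"
proof -
  have "(transpose B *v u - B *v u) \<bullet> w = 0" for u w
    using assms[of u w] by (simp add: dot_lmul_matrix inner_diff_left)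
  then have "transpose B *v u = B *v u" for u
    by (metis inner_eq_zero_iff eq_iff_diff_eq_0)
  then show ?thesis by (simp add: matrix_eq)
qed

lemma symmetric_matrix_kernel_of_orthogonal_range:
  fixes A :: "real^'n^'n"
  assumes "transpose A = A" and "\<And>s. q \<bullet> (A *v s) = 0"
  shows "A *v q = 0"
proof -
  have "(A *v q) \<bullet> (A *v q) = q \<bullet> (A *v (A *v q))"
    by (rule symmetric_matrix_inner[OF assms(1)])
  then show ?thesis using assms(2) by simp
qed

lemma symmetric_matrix_range_kernel_decomp:
  fixes A :: "real^'n^'n"
  assumes "transpose A = A"
  obtains s k where "y = A *v s + k" and "A *v k = 0"
proof -
  let ?R = "range ((*v) A)"
  have span_R: "span ?R = ?R"
    by (simp add: linear_subspace_image)
  obtain p k where p: "p \<in> span ?R" and k: "\<And>w. w \<in> span ?R \<Longrightarrow> orthogonal k w"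
    and y: "y = p + k"
    using orthogonal_subspace_decomp_exists[of ?R y] by blast
  have "A *v k = 0"
    using assms by (rule symmetric_matrix_kernel_of_orthogonal_range)
      (use k span_R in \<open>auto simp: orthogonal_def\<close>)
  with p y span_R that show thesis by auto
qed

lemma symmetric_matrix_range_eq_orthogonal_kernel:
  fixes A :: "real^'n^'n"
  assumes sym: "transpose A = A" and orth: "\<And>k. A *v k = 0 \<Longrightarrow> z \<bullet> k = 0"
  shows "\<exists>s. z = A *v s"
proof -
  obtain s k where z: "z = A *v s + k" and k: "A *v k = 0"
    using sym by (rule symmetric_matrix_range_kernel_decomp)
  have "k \<bullet> k = z \<bullet> k - (A *v s) \<bullet> k"
    by (simp add: z inner_add_left)
  also have "\<dots> = 0"
    using orth[OF k] k by (simp add: symmetric_matrix_inner[OF sym])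
  finally show ?thesis using z by auto
qed

definition penrose :: "real^'n^'m \<Rightarrow> real^'m^'n \<Rightarrow> bool" where
  "penrose A X \<longleftrightarrow> A ** X ** A = A \<and> X ** A ** X = X \<and>
     transpose (A ** X) = A ** X \<and> transpose (X ** A) = X ** A"

lemma penrose_unique:
  assumes "penrose A X" and "penrose A Y"
  shows "X = Y"
proof -
  have X: "A ** X ** A = A" "X ** A ** X = X" "transpose (A ** X) = A ** X"
    "transpose (X ** A) = X ** A" using assms(1) unfolding penrose_def by auto
  have Y: "A ** Y ** A = A" "Y ** A ** Y = Y" "transpose (A ** Y) = A ** Y"
    "transpose (Y ** A) = Y ** A" using assms(2) unfolding penrose_def by auto
  have "X = X ** transpose (A ** X)"
    using X(2,3) by (simp add: matrix_mul_assoc)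
  also have "\<dots> = X ** transpose (A ** Y ** A ** X)"
    using Y(1) by simp
  also have "\<dots> = X ** transpose (A ** X) ** transpose (A ** Y)"
    by (simp add: matrix_transpose_mul matrix_mul_assoc)
  also have "\<dots> = X ** A ** Y"
    using X(2,3) Y(3) by (simp add: matrix_mul_assoc)
  finally have XAY: "X = X ** A ** Y" .
  have "Y = transpose (Y ** A) ** Y"
    using Y(2,4) by simp
  also have "\<dots> = transpose (Y ** (A ** X ** A)) ** Y"
    using X(1) by simp
  also have "\<dots> = transpose (X ** A) ** transpose (Y ** A) ** Y"
    by (simp add: matrix_transpose_mul matrix_mul_assoc)
  also have "\<dots> = X ** A ** Y"
    using X(4) Y(2,4) by (metis matrix_mul_assoc)
  finally show ?thesis using XAY by simp
qed

lemma pinv_eqI: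
  assumes "penrose A X"
  shows "pinv A = X"
  unfolding pinv_def penrose_def[symmetric]
  using assms penrose_unique by blast

lemma symmetric_matrix_inj_on_range:
  fixes A :: "real^'n^'n"
  assumes sym: "transpose A = A"
  shows "inj_on ((*v) A) (range ((*v) A))"
proof (rule linear_inj_on_iff_eq_0[THEN iffD2])
  show "\<forall>r\<in>range ((*v) A). A *v r = 0 \<longrightarrow> r = 0"
  proof (intro ballI impI)
    fix r assume "r \<in> range ((*v) A)" and Ar: "A *v r = 0"
    then obtain s where "r = A *v s" by auto
    then have "r \<bullet> r = s \<bullet> (A *v r)" by (simp add: symmetric_matrix_inner[OF sym])
    then show "r = 0" using Ar by simp
  qed
qed (simp_all add: linear_subspace_image)

lemma penrose_if_commuting_projection:
  assumes "A ** X = P" and "X ** A = P" and "transpose P = P" and "P ** A = A" and "P ** X = X"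
  shows "penrose A X"
  using assms unfolding penrose_def by (metis matrix_mul_assoc)

lemma penrose_exists_symmetric:
  fixes A :: "real^'n^'n"
  assumes sym: "transpose A = A"
  shows "\<exists>X. penrose A X"
proof -
  let ?R = "range ((*v) A)"
  obtain g where gR: "range g \<subseteq> ?R" and lin_g: "linear g"
    and g_inv: "\<And>r. r \<in> ?R \<Longrightarrow> g (A *v r) = r"
    using linear_exists_left_inverse_on[OF _ _ symmetric_matrix_inj_on_range[OF sym]]
    by (auto simp: linear_subspace_image)
  \<comment> \<open>\<open>p = g \<circ> A\<close> is the orthogonal projection onto the range, and \<open>g \<circ> p\<close> is the pseudo-inverse.\<close>
  define p where "p y = g (A *v y)" for y
  have p_range: "p y \<in> ?R" for y
    unfolding p_def using gR by auto
  have p_fix: "p r = r" if "r \<in> ?R" for r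
    unfolding p_def using g_inv that .
  have A_p: "A *v p y = A *v y" for y
  proof -
    obtain s k where y: "y = A *v s + k" and k: "A *v k = 0"
      using sym by (rule symmetric_matrix_range_kernel_decomp)
    then have "p y = A *v s"
      unfolding p_def by (simp add: matrix_vector_right_distrib g_inv)
    then show ?thesis using y k by (simp add: matrix_vector_right_distrib)
  qed
  have A_g: "A *v g r = r" if r: "r \<in> ?R" for r
  proof -
    obtain s where r: "r = A *v s" using r by auto
    then have "g r = p s" using A_p g_inv p_range by metis
    then show ?thesis using A_p r by simp
  qed
  have p_orth: "(y - p y) \<bullet> r = 0" if r: "r \<in> ?R" for y r
  proof -
    obtain s where "r = A *v s" using r by auto
    then show ?thesis
      by (simp add: symmetric_matrix_inner[OF sym, symmetric] matrix_vector_mult_diff_distrib A_p)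
  qed
  have lin_p: "linear p"
    unfolding p_def using lin_g by (simp add: linear_compose[of "(*v) A" g, unfolded o_def])
  define P where "P = matrix p"
  define X where "X = matrix g ** P"
  have P: "P *v y = p y" for y
    unfolding P_def by (simp add: matrix_works lin_p linear_matrix_vector_mul_eq)
  have X: "X *v y = g (p y)" for y
    unfolding X_def
    by (simp add: matrix_vector_mul_assoc[symmetric] P matrix_works lin_g linear_matrix_vector_mul_eq)
  have "transpose P = P"
  proof (rule transpose_eq_selfI)
    fix u w
    have "u \<bullet> p w = p u \<bullet> p w" "w \<bullet> p u = p w \<bullet> p u"
      using p_orth[OF p_range, of u w] p_orth[OF p_range, of w u]
      by (simp_all add: inner_diff_left)
    then show "u \<bullet> (P *v w) = (P *v u) \<bullet> w"
      by (metis P inner_commute)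
  qed
  moreover have "A ** X = P"
    by (simp add: matrix_eq matrix_vector_mul_assoc[symmetric] X P A_g p_range)
  moreover have "X ** A = P"
    by (simp add: matrix_eq matrix_vector_mul_assoc[symmetric] X P p_fix[OF rangeI] p_def[symmetric])
  moreover have "P ** A = A"
    by (simp add: matrix_eq matrix_vector_mul_assoc[symmetric] P p_fix)
  moreover have "P ** X = X"
    using gR by (auto simp: matrix_eq matrix_vector_mul_assoc[symmetric] P X intro!: p_fix)
  ultimately show ?thesis
    using penrose_if_commuting_projection by blast
qed

lemma pinv_symmetric:
  fixes A :: "real^'n^'n"
  assumes "transpose A = A"
  shows "A ** pinv A ** A = A"
proof -
  obtain X where "penrose A X"
    using penrose_exists_symmetric[OF assms] ..
  then show ?thesis
    using pinv_eqI unfolding penrose_def by metis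
qed

section \<open>Semidefinite quadratic forms\<close>

lemma neg_matrix_vector_mult: "(- A) *v x = - (A *v (x :: real^'n))"
  by (simp add: vec_eq_iff matrix_vector_mult_def sum_negf)

lemma loewner_le_zero_iff: "loewner_le A 0 \<longleftrightarrow> (\<forall>x. x \<bullet> (A *v x) \<le> 0)"
  by (simp add: loewner_le_def psd_def neg_matrix_vector_mult)

lemma linear_term_zero_if_nonneg:
  fixes a b :: real
  assumes nonneg: "\<And>t. 0 \<le> b * t + a * t^2"
  shows "b = 0"
proof (rule ccontr)
  assume b: "b \<noteq> 0"
  define d where "d = \<bar>a\<bar> + 1"
  have d: "d > 0" "a - d < 0" unfolding d_def by auto
  have "0 \<le> b * (- b / d) + a * (- b / d)^2"
    by (rule nonneg)
  also have "\<dots> = b^2 * (a - d) / d^2"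
    using d by (simp add: field_simps power2_eq_square)
  also have "\<dots> < 0"
    using b d by (intro divide_neg_pos mult_pos_neg) auto
  finally show False by simp
qed

lemma coefficients_zero_if_positive_concave:
  fixes a b c :: real
  assumes pos: "\<And>t. 0 < c + b * t + a * t^2" and "a \<le> 0"
  shows "a = 0 \<and> b = 0"
proof -
  have b: "b = 0"
  proof (rule ccontr)
    assume "b \<noteq> 0"
    then have "c + b * (- c / b) + a * (- c / b)^2 \<le> 0"
      using \<open>a \<le> 0\<close> by (simp add: mult_nonpos_nonneg)
    with pos show False by (meson not_less)
  qed
  have "a = 0"
  proof (rule ccontr)
    assume "a \<noteq> 0"
    with \<open>a \<le> 0\<close> have "a < 0" by simp
    moreover have "0 < c" using pos[of 0] by simp
    ultimately have "(sqrt (c / - a))^2 = c / - a"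
      by (simp add: divide_pos_neg less_imp_le)
    then have "c + b * sqrt (c / - a) + a * (sqrt (c / - a))^2 = 0"
      using b \<open>a < 0\<close> by simp
    with pos show False by (metis less_irrefl)
  qed
  with b show ?thesis by simp
qed

lemma symmetric_psd_form_zero:
  fixes A :: "real^'n^'n"
  assumes sym: "transpose A = A" and "psd A" and zero: "x \<bullet> (A *v x) = 0"
  shows "A *v x = 0"
proof -
  have "y \<bullet> (A *v x) = 0" for y
  proof -
    have "(x + t *\<^sub>R y) \<bullet> (A *v (x + t *\<^sub>R y)) = (2 * (y \<bullet> (A *v x))) * t + (y \<bullet> (A *v y)) * t^2"
      for t
      using zero symmetric_matrix_inner[OF sym, of y x] inner_commute[of x "A *v y"]
      by (simp add: algebra_simps inner_add_left inner_add_right power2_eq_square)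
    then have "0 \<le> (2 * (y \<bullet> (A *v x))) * t + (y \<bullet> (A *v y)) * t^2" for t
      using \<open>psd A\<close> unfolding psd_def by metis
    then show ?thesis using linear_term_zero_if_nonneg by fastforce
  qed
  from this[of "A *v x"] show ?thesis by simp
qed

lemma symmetric_nsd_form_zero:
  fixes A :: "real^'n^'n"
  assumes sym: "transpose A = A" and "loewner_le A 0" and zero: "x \<bullet> (A *v x) = 0"
  shows "A *v x = 0"
proof -
  have "(- A) *v x = 0"
  proof (rule symmetric_psd_form_zero)
    show "transpose (- A) = - A" using sym by (simp add: vec_eq_iff transpose_def)
    show "psd (- A)" using \<open>loewner_le A 0\<close> by (simp add: loewner_le_def)
    show "x \<bullet> (- A *v x) = 0" using zero by (simp add: neg_matrix_vector_mult)
  qed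
  then show ?thesis by (simp add: neg_matrix_vector_mult)
qed

lemma symmetric_form_kernel_shift:
  fixes A :: "real^'n^'n"
  assumes sym: "transpose A = A" and "A *v e = 0"
  shows "(x + e) \<bullet> (A *v (x + e)) = x \<bullet> (A *v x)"
  using assms symmetric_matrix_inner[OF sym, of e x]
  by (simp add: matrix_vector_right_distrib inner_add_left)

lemma congruence_form:
  fixes A :: "real^'m^'m" and S :: "real^'n^'m"
  shows "y \<bullet> ((transpose S ** A ** S) *v x) = (S *v y) \<bullet> (A *v (S *v x))"
proof -
  have "y \<bullet> ((transpose S ** A ** S) *v x) = y \<bullet> (transpose S *v (A *v (S *v x)))"
    by (simp add: matrix_vector_mul_assoc matrix_mul_assoc)
  also have "\<dots> = (S *v y) \<bullet> (A *v (S *v x))"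
    by (metis dot_lmul_matrix inner_commute transpose_matrix_vector)
  finally show ?thesis .
qed

lemma inner_vector_matrix_mult: "(a :: real^'n) \<bullet> (z v* K) = (K *v a) \<bullet> z"
  by (metis dot_lmul_matrix inner_commute)

section \<open>Block vectors\<close>

definition vinl :: "real^'q \<Rightarrow> real^('q::finite + 'r::finite)" where
  "vinl u = (\<chi> a. case a of Inl i \<Rightarrow> u $ i | Inr _ \<Rightarrow> 0)"

definition vinr :: "real^'r \<Rightarrow> real^('q::finite + 'r::finite)" where
  "vinr v = (\<chi> a. case a of Inl _ \<Rightarrow> 0 | Inr j \<Rightarrow> v $ j)"

definition vupper :: "real^('q::finite + 'r::finite) \<Rightarrow> real^'q" where
  "vupper x = (\<chi> i. x $ Inl i)"

definition vlower :: "real^('q::finite + 'r::finite) \<Rightarrow> real^'r" where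
  "vlower x = (\<chi> j. x $ Inr j)"

lemma sum_UNIV_Plus:
  "(\<Sum>a\<in>(UNIV :: ('q::finite + 'r::finite) set). f a) = (\<Sum>i\<in>UNIV. f (Inl i)) + (\<Sum>j\<in>UNIV. f (Inr j))"
  by (subst UNIV_Plus_UNIV[symmetric], subst sum.Plus) (simp_all add: o_def)

lemma vinl_vinr_decomp: "x = vinl (vupper x) + vinr (vlower x)"
  by (simp add: vec_eq_iff vinl_def vinr_def vupper_def vlower_def split: sum.splits)

lemma vupper_vlower_simps [simp]:
  "vupper (vinl u) = u" "vlower (vinl u) = 0" "vupper (vinr v) = 0" "vlower (vinr v) = v"
  "vupper (x + y) = vupper x + vupper y" "vlower (x + y) = vlower x + vlower y"
  "vupper (x - y) = vupper x - vupper y" "vlower (x - y) = vlower x - vlower y"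
  "vupper (c *\<^sub>R x) = c *\<^sub>R vupper x" "vlower (c *\<^sub>R x) = c *\<^sub>R vlower x"
  "vupper 0 = 0" "vlower 0 = 0"
  by (simp_all add: vec_eq_iff vinl_def vinr_def vupper_def vlower_def)

lemma vinl_vinr_simps [simp]:
  "vinl (u + u') = vinl u + vinl u'" "vinr (v + v') = vinr v + vinr v'"
  "vinl (u - u') = vinl u - vinl u'" "vinr (v - v') = vinr v - vinr v'"
  "vinl (c *\<^sub>R u) = c *\<^sub>R vinl u" "vinr (c *\<^sub>R v) = c *\<^sub>R vinr v"
  "vinl 0 = 0" "vinr 0 = 0"
  by (simp_all add: vec_eq_iff vinl_def vinr_def split: sum.splits)

lemma inner_vinl: "vinl u \<bullet> y = u \<bullet> vupper y"
  by (simp add: inner_vec_def sum_UNIV_Plus vinl_def vupper_def)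

lemma inner_vinr: "vinr v \<bullet> y = v \<bullet> vlower y"
  by (simp add: inner_vec_def sum_UNIV_Plus vinr_def vlower_def)

lemma inner_blocks: "x \<bullet> y = vupper x \<bullet> vupper y + vlower x \<bullet> vlower y"
  by (subst vinl_vinr_decomp[of x]) (simp add: inner_add_left inner_vinl inner_vinr)

lemma block_matrix_vector_mult:
  fixes A :: "real^('q::finite + 'r::finite)^('q + 'r)"
  shows "vupper (A *v vinl u) = blk11 A *v u" "vlower (A *v vinl u) = blk21 A *v u"
    "vupper (A *v vinr v) = blk12 A *v v" "vlower (A *v vinr v) = blk22 A *v v"
  by (simp_all add: vec_eq_iff vupper_def vlower_def vinl_def vinr_def blk11_def blk12_def
      blk21_def blk22_def matrix_vector_mult_def sum_UNIV_Plus)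

lemma block_form:
  fixes A :: "real^('q::finite + 'r::finite)^('q + 'r)"
  shows "y \<bullet> (A *v x) = vupper y \<bullet> (blk11 A *v vupper x) + vlower y \<bullet> (blk21 A *v vupper x)
      + vupper y \<bullet> (blk12 A *v vlower x) + vlower y \<bullet> (blk22 A *v vlower x)"
proof -
  have "A *v x = A *v vinl (vupper x) + A *v vinr (vlower x)"
    by (subst vinl_vinr_decomp[of x]) (simp add: matrix_vector_right_distrib)
  then show ?thesis
    by (simp add: inner_blocks[of y] inner_add_right block_matrix_vector_mult)
qed

lemma symmetric_blocks:
  fixes A :: "real^('q::finite + 'r::finite)^('q + 'r)"
  assumes "sym_mat A"
  shows "blk12 A = transpose (blk21 A)" and "transpose (blk22 A) = blk22 A"
proof -
  have entry: "A $ i $ j = A $ j $ i" for i j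
  proof -
    have "transpose A $ j $ i = A $ j $ i" using assms unfolding sym_mat_def by simp
    then show ?thesis unfolding transpose_def by simp
  qed
  show "blk12 A = transpose (blk21 A)"
    unfolding vec_eq_iff blk12_def blk21_def transpose_def by (simp add: entry[of "Inl _"])
  show "transpose (blk22 A) = blk22 A"
    unfolding vec_eq_iff blk22_def transpose_def by (simp add: entry[of "Inr _" "Inr _"])
qed

lemma sum_delta_mult:
  "(\<Sum>j\<in>(UNIV::'a::finite set). (if a = j then c else 0) * (t j :: real)) = c * t a"
proof -
  have "(\<Sum>j\<in>(UNIV::'a set). (if a = j then c else 0) * t j) = (\<Sum>j\<in>UNIV. if a = j then c * t j else 0)"
    by (rule sum.cong) auto
  then show ?thesis by simp
qed

lemma stackIZ_mult: "stackIZ Z *v y = vinl y + vinr (Z *v y)"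
proof -
  have "(stackIZ Z *v y) $ a = (vinl y + vinr (Z *v y)) $ a" for a
    by (cases a) (simp_all add: stackIZ_def vinl_def vinr_def matrix_vector_mult_def
        sum_delta_mult)
  then show ?thesis by (simp add: vec_eq_iff)
qed

lemma betaI_mult: "betaI b *v x = b *\<^sub>R vinl (vupper x)"
proof -
  have "(betaI b *v x) $ a = (b *\<^sub>R vinl (vupper x)) $ a" for a
    by (cases a) (simp_all add: betaI_def vinl_def vupper_def matrix_vector_mult_def sum_UNIV_Plus
        sum_delta_mult)
  then show ?thesis by (simp add: vec_eq_iff)
qed

section \<open>Matrices with vanishing Schur complement\<close>

definition shear :: "real^'q^'r \<Rightarrow> real^('q::finite + 'r::finite) \<Rightarrow> real^'r" where
  "shear K x = K *v vupper x + vlower x"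

lemma shear_vinl_vinr [simp]: "shear K (vinl u + vinr v) = K *v u + v"
  by (simp add: shear_def)

lemma schur_zero_block_factorization:
  fixes N :: "real^('q::finite + 'r::finite)^('q + 'r)"
  assumes sym: "sym_mat N" and ker: "\<And>v. blk22 N *v v = 0 \<Longrightarrow> blk12 N *v v = 0"
    and schur: "schur N = 0"
  obtains K where "blk21 N = blk22 N ** K" and "blk12 N = transpose K ** blk22 N"
    and "blk11 N = transpose K ** blk22 N ** K"
proof -
  define D where "D = blk22 N"
  define K where "K = pinv D ** blk21 N"
  have D_sym: "transpose D = D" and N12: "blk12 N = transpose (blk21 N)"
    unfolding D_def using symmetric_blocks[OF sym] by simp_all
  have range: "\<exists>s. blk21 N *v u = D *v s" for u
  proof (rule symmetric_matrix_range_eq_orthogonal_kernel[OF D_sym])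
    fix k assume "D *v k = 0"
    then have "blk12 N *v k = 0" using ker unfolding D_def by blast
    have "(blk21 N *v u) \<bullet> k = (k v* blk21 N) \<bullet> u"
      by (metis dot_lmul_matrix inner_commute)
    also have "k v* blk21 N = blk12 N *v k"
      by (simp add: N12)
    finally show "(blk21 N *v u) \<bullet> k = 0"
      using \<open>blk12 N *v k = 0\<close> by simp
  qed
  have DK: "D ** K = blk21 N"
  proof -
    have "(D ** K) *v u = blk21 N *v u" for u
    proof -
      obtain s where s: "blk21 N *v u = D *v s" using range by blast
      have "(D ** K) *v u = (D ** pinv D ** D) *v s"
        by (simp add: K_def matrix_vector_mul_assoc[symmetric] s)
      then show ?thesis using pinv_symmetric[OF D_sym] s by simp
    qed
    then show ?thesis by (simp add: matrix_eq)
  qed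
  have N12K: "blk12 N = transpose K ** D"
    by (simp add: N12 DK[symmetric] matrix_transpose_mul D_sym)
  have "blk11 N = blk12 N ** pinv D ** blk21 N"
    using schur unfolding schur_def D_def by simp
  also have "\<dots> = transpose K ** (D ** pinv D ** D) ** K"
    by (simp add: N12K DK[symmetric] matrix_mul_assoc)
  finally have "blk11 N = transpose K ** D ** K"
    using pinv_symmetric[OF D_sym] by simp
  with DK N12K show thesis
    unfolding D_def by (intro that) simp_all
qed

lemma block_factorization_form:
  fixes N :: "real^('q::finite + 'r::finite)^('q + 'r)"
  assumes N21: "blk21 N = blk22 N ** K" and N12: "blk12 N = transpose K ** blk22 N"
    and N11: "blk11 N = transpose K ** blk22 N ** K"
  shows "y \<bullet> (N *v x) = shear K y \<bullet> (blk22 N *v shear K x)"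
proof -
  let ?D = "blk22 N"
  have "y \<bullet> (N *v x) = vupper y \<bullet> (blk11 N *v vupper x) + vlower y \<bullet> (blk21 N *v vupper x)
      + vupper y \<bullet> (blk12 N *v vlower x) + vlower y \<bullet> (?D *v vlower x)"
    by (rule block_form)
  also have "\<dots> = (K *v vupper y) \<bullet> (?D *v (K *v vupper x)) + vlower y \<bullet> (?D *v (K *v vupper x))
      + (K *v vupper y) \<bullet> (?D *v vlower x) + vlower y \<bullet> (?D *v vlower x)"
    unfolding N11 N12 N21
    by (simp add: matrix_vector_mul_assoc[symmetric] inner_vector_matrix_mult)
  finally show ?thesis
    by (simp add: shear_def matrix_vector_right_distrib inner_add_left inner_add_right)
qed

lemma Zzero_if_shear_kernel:
  fixes N :: "real^('q::finite + 'r::finite)^('q + 'r)" and K Z :: "real^'q^'r"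
  assumes fac: "\<And>x y. y \<bullet> (N *v x) = shear K y \<bullet> (D *v shear K x)"
    and ker: "\<And>y. D *v (K *v y + Z *v y) = 0"
  shows "Z \<in> Zzero N"
proof -
  have "(transpose (stackIZ Z) ** N ** stackIZ Z) *v y = 0" for y
  proof -
    define c where "c = (transpose (stackIZ Z) ** N ** stackIZ Z) *v y"
    have "c \<bullet> c = (stackIZ Z *v c) \<bullet> (N *v (stackIZ Z *v y))"
      unfolding c_def by (rule congruence_form)
    also have "\<dots> = 0"
      by (simp add: fac stackIZ_mult ker)
    finally show ?thesis unfolding c_def by simp
  qed
  then show ?thesis by (simp add: Zzero_def matrix_eq)
qed

lemma form_positive_on_shifted_kernel:
  fixes M N :: "real^('q::finite + 'r::finite)^('q + 'r)" and K :: "real^'q^'r"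
  assumes fac: "\<And>x y. y \<bullet> (N *v x) = shear K y \<bullet> (D *v shear K x)"
    and incl: "Zzero N \<subseteq> Zplus M" and u: "u \<noteq> 0" and w: "D *v w = 0"
  shows "0 < (vinl u + vinr (w - K *v u)) \<bullet> (M *v (vinl u + vinr (w - K *v u)))"
proof -
  define Z where "Z = (\<chi> i j. w $ i * u $ j / (u \<bullet> u)) - K"
  have rank_one: "(\<chi> i j. w $ i * u $ j / (u \<bullet> u)) *v y = ((u \<bullet> y) / (u \<bullet> u)) *\<^sub>R w" for y
    by (simp add: vec_eq_iff matrix_vector_mult_def inner_vec_def sum_divide_distrib
        sum_distrib_left algebra_simps)
  have Zy: "K *v y + Z *v y = ((u \<bullet> y) / (u \<bullet> u)) *\<^sub>R w" for y
    by (simp add: Z_def matrix_vector_mult_diff_rdistrib rank_one)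
  have "Z \<in> Zzero N"
    using fac by (rule Zzero_if_shear_kernel) (simp add: Zy matrix_vector_mult_scaleR w)
  with incl have "Z \<in> Zplus M" by blast
  then have "0 < u \<bullet> ((transpose (stackIZ Z) ** M ** stackIZ Z) *v u)"
    using u unfolding Zplus_def pd_def by blast
  also have "\<dots> = (stackIZ Z *v u) \<bullet> (M *v (stackIZ Z *v u))"
    by (rule congruence_form)
  also have "stackIZ Z *v u = vinl u + vinr (w - K *v u)"
  proof -
    have "Z *v u = w - K *v u"
      using Zy[of u] u by (metis add.commute eq_diff_eq divide_self_if inner_eq_zero_iff scaleR_one)
    then show ?thesis by (simp add: stackIZ_mult)
  qed
  finally show ?thesis .
qed

lemma kernel_vinr_if_positive_on_shifted_kernel:
  fixes M :: "real^('q::finite + 'r::finite)^('q + 'r)" and K :: "real^'q^'r"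
  assumes sym: "sym_mat M" and M22: "loewner_le (blk22 M) 0"
    and pos: "\<And>u w. u \<noteq> 0 \<Longrightarrow> D *v w = 0 \<Longrightarrow>
      0 < (vinl u + vinr (w - K *v u)) \<bullet> (M *v (vinl u + vinr (w - K *v u)))"
    and v: "D *v v = 0"
  shows "M *v vinr v = 0"
proof -
  have M_sym: "transpose M = M" using sym by (simp add: sym_mat_def)
  define e :: "real^('q + 'r)" where "e = vinr v"
  have orth: "e \<bullet> (M *v e) = 0 \<and> (vinl u - vinr (K *v u)) \<bullet> (M *v e) = 0" if u: "u \<noteq> 0" for u
  proof -
    define x where "x = vinl u - vinr (K *v u)"
    have "0 < x \<bullet> (M *v x) + (2 * (x \<bullet> (M *v e))) * t + (e \<bullet> (M *v e)) * t^2" for t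
    proof -
      have "0 < (x + t *\<^sub>R e) \<bullet> (M *v (x + t *\<^sub>R e))"
        using pos[OF u, of "t *\<^sub>R v"] v
        by (simp add: x_def e_def matrix_vector_mult_scaleR algebra_simps)
      also have "\<dots> = x \<bullet> (M *v x) + (2 * (x \<bullet> (M *v e))) * t + (e \<bullet> (M *v e)) * t^2"
        using symmetric_matrix_inner[OF M_sym, of e x] inner_commute[of x "M *v e"]
        by (simp add: matrix_vector_right_distrib matrix_vector_mult_scaleR inner_add_left
            inner_add_right algebra_simps power2_eq_square)
      finally show ?thesis .
    qed
    moreover have "e \<bullet> (M *v e) \<le> 0"
      using M22 by (simp add: loewner_le_zero_iff e_def inner_vinr block_matrix_vector_mult)
    ultimately have "e \<bullet> (M *v e) = 0 \<and> 2 * (x \<bullet> (M *v e)) = 0"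
      by (intro coefficients_zero_if_positive_concave) auto
    then show ?thesis unfolding x_def by simp
  qed
  have "(1 :: real^'q) \<noteq> 0" by (simp add: vec_eq_iff)
  then have "v \<bullet> (blk22 M *v v) = 0"
    using orth[OF \<open>(1 :: real^'q) \<noteq> 0\<close>] by (simp add: e_def inner_vinr block_matrix_vector_mult)
  then have lower: "vlower (M *v e) = 0"
    using symmetric_nsd_form_zero[OF symmetric_blocks(2)[OF sym] M22]
    by (simp add: e_def block_matrix_vector_mult)
  have upper: "vupper (M *v e) = 0"
  proof (rule ccontr)
    assume ne: "vupper (M *v e) \<noteq> 0"
    then have "vupper (M *v e) \<bullet> vupper (M *v e) = 0"
      using orth[OF ne] lower by (simp add: inner_diff_left inner_vinl inner_vinr)
    with ne show False by simp
  qed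
  show ?thesis
    using vinl_vinr_decomp[of "M *v e"] upper lower by (simp add: e_def)
qed

lemma form_dichotomy_on_kernel_complement:
  fixes M N :: "real^('q::finite + 'r::finite)^('q + 'r)" and K :: "real^'q^'r"
  assumes D_sym: "transpose D = D" and D_nsd: "loewner_le D 0"
    and fac: "\<And>x y. y \<bullet> (N *v x) = shear K y \<bullet> (D *v shear K x)"
    and pos: "\<And>u w. u \<noteq> 0 \<Longrightarrow> D *v w = 0 \<Longrightarrow>
      0 < (vinl u + vinr (w - K *v u)) \<bullet> (M *v (vinl u + vinr (w - K *v u)))"
    and "x \<noteq> 0" and orth: "\<And>k. D *v k = 0 \<Longrightarrow> vlower x \<bullet> k = 0"
  shows "x \<bullet> (N *v x) < 0 \<or> 0 < x \<bullet> (M *v x)"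
proof (cases "x \<bullet> (N *v x) = 0")
  case False
  then show ?thesis
    using D_nsd by (simp add: fac loewner_le_zero_iff less_le)
next
  case True
  then have ker: "D *v shear K x = 0"
    by (intro symmetric_nsd_form_zero[OF D_sym D_nsd]) (simp add: fac)
  show ?thesis
  proof (cases "vupper x = 0")
    case True
    then have "vlower x \<bullet> vlower x = 0"
      using ker orth by (simp add: shear_def)
    then show ?thesis
      using True \<open>x \<noteq> 0\<close> vinl_vinr_decomp[of x] by simp
  next
    case False
    from pos[OF False ker] show ?thesis
      by (simp add: shear_def vinl_vinr_decomp[of x, symmetric])
  qed
qed

lemma exists_nat_positive_combination:
  fixes f g :: real
  assumes "g \<le> 0" and "g < 0 \<or> 0 < f"
  shows "\<exists>n. 1 / real (Suc n) < f - real (Suc n) * g"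
proof (cases "g < 0")
  case True
  obtain n where "(1 + \<bar>f\<bar>) / - g < real n"
    using reals_Archimedean2 by blast
  then have "1 + \<bar>f\<bar> < - (real (Suc n) * g)"
    using True by (simp add: field_simps)
  moreover have "1 / real (Suc n) \<le> 1" by simp
  ultimately show ?thesis
    using abs_ge_minus_self[of f] by (intro exI[of _ n]) linarith
next
  case False
  with assms have "g = 0" "0 < f" by auto
  moreover obtain n where "inverse (real (Suc n)) < f"
    using reals_Archimedean \<open>0 < f\<close> by blast
  ultimately show ?thesis by (auto simp: inverse_eq_divide)
qed

lemma compact_uniform_positive_combination:
  fixes f g :: "'a::topological_space \<Rightarrow> real"
  assumes "compact C" and f: "continuous_on UNIV f" and g: "continuous_on UNIV g"
    and nonpos: "\<And>x. x \<in> C \<Longrightarrow> g x \<le> 0" and dichotomy: "\<And>x. x \<in> C \<Longrightarrow> g x < 0 \<or> 0 < f x"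
  obtains a where "a \<ge> 1" and "\<And>x. x \<in> C \<Longrightarrow> 1 / a < f x - a * g x"
proof -
  define U where "U n = {x. 1 / real (Suc n) < f x - real (Suc n) * g x}" for n
  have open_U: "open (U n)" for n
    unfolding U_def by (intro open_Collect_less continuous_intros f g)
  have cover: "C \<subseteq> (\<Union>n. U n)"
    using exists_nat_positive_combination[OF nonpos dichotomy] by (auto simp: U_def)
  obtain F where "finite F" and F: "C \<subseteq> (\<Union>n\<in>F. U n)"
    by (rule compactE_image[OF \<open>compact C\<close> open_U cover])
  define a where "a = real (Suc (Max (insert 0 F)))"
  show thesis
  proof
    show "a \<ge> 1" unfolding a_def by simp
    fix x assume x: "x \<in> C"
    then obtain n where n: "n \<in> F" "x \<in> U n" using F by blast
    then have le: "real (Suc n) \<le> a"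
      using \<open>finite F\<close> unfolding a_def by simp
    have "1 / a \<le> 1 / real (Suc n)"
      using le by (simp add: frac_le)
    also have "\<dots> < f x - real (Suc n) * g x"
      using n unfolding U_def by simp
    also have "\<dots> \<le> f x - a * g x"
      using le nonpos[OF x] by (simp add: mult_right_mono_neg)
    finally show "1 / a < f x - a * g x" .
  qed
qed

lemma betaI_form: "x \<bullet> (betaI b *v x) = b * (vupper x \<bullet> vupper x)"
  by (simp add: betaI_mult inner_commute[of x] inner_vinl)

lemma loewner_le_betaI_of_sphere_bound:
  fixes M N :: "real^('q::finite + 'r::finite)^('q + 'r)" and D :: "real^'r^'r"
  assumes M_sym: "transpose M = M" and N_sym: "transpose N = N" and D_sym: "transpose D = D"
    and M_ker: "\<And>v. D *v v = 0 \<Longrightarrow> M *v vinr v = 0"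
    and N_ker: "\<And>v. D *v v = 0 \<Longrightarrow> N *v vinr v = 0"
    and "a > 0"
    and bound: "\<And>x. norm x = 1 \<Longrightarrow> \<forall>k. D *v k = 0 \<longrightarrow> vlower x \<bullet> k = 0 \<Longrightarrow>
      1 / a < x \<bullet> (M *v x) - a * (x \<bullet> (N *v x))"
  shows "loewner_le (betaI (1 / a)) (M - a *\<^sub>R N)"
  unfolding loewner_le_def psd_def
proof
  fix x :: "real^('q + 'r)"
  obtain s k where lower: "vlower x = D *v s + k" and k: "D *v k = 0"
    using D_sym by (rule symmetric_matrix_range_kernel_decomp)
  define x' where "x' = x - vinr k"
  have x: "x = x' + vinr k" unfolding x'_def by simp
  have orth: "\<forall>k'. D *v k' = 0 \<longrightarrow> vlower x' \<bullet> k' = 0"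
    by (simp add: x'_def lower symmetric_matrix_inner[OF D_sym])
  have "x \<bullet> ((M - a *\<^sub>R N - betaI (1 / a)) *v x)
      = x' \<bullet> (M *v x') - a * (x' \<bullet> (N *v x')) - (vupper x' \<bullet> vupper x') / a"
    unfolding matrix_vector_mult_diff_rdistrib inner_diff_right betaI_form
      scaleR_matrix_vector_assoc[symmetric]
    by (simp add: x symmetric_form_kernel_shift M_sym N_sym M_ker N_ker k)
  also have "\<dots> \<ge> 0"
  proof (cases "x' = 0")
    case False
    define y where "y = x' /\<^sub>R norm x'"
    have "1 / a < y \<bullet> (M *v y) - a * (y \<bullet> (N *v y))"
      using False orth by (intro bound) (simp_all add: y_def)
    also have "\<dots> = (x' \<bullet> (M *v x') - a * (x' \<bullet> (N *v x'))) / (norm x')^2"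
      using False by (simp add: y_def matrix_vector_mult_scaleR power2_eq_square field_simps)
    finally have "(norm x')^2 / a < x' \<bullet> (M *v x') - a * (x' \<bullet> (N *v x'))"
      using False \<open>a > 0\<close> by (simp add: field_simps)
    moreover have "vupper x' \<bullet> vupper x' \<le> (norm x')^2"
      by (simp add: power2_norm_eq_inner inner_blocks[of x' x'])
    ultimately show ?thesis
      using \<open>a > 0\<close> divide_right_mono[of "vupper x' \<bullet> vupper x'" "(norm x')^2" a] by linarith
  qed simp
  finally show "0 \<le> x \<bullet> ((M - a *\<^sub>R N - betaI (1 / a)) *v x)" .
qed

lemma schur_zero_necessity:
  fixes M N :: "real^('q::finite + 'r::finite)^('q + 'r)"
  assumes M_sym: "sym_mat M" and N_sym: "sym_mat N" and "N \<in> PiSet" and "schur N = 0"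
    and M22: "loewner_le (blk22 M) 0" and incl: "Zzero N \<subseteq> Zplus M"
  shows "\<exists>\<alpha> \<beta>. \<alpha> \<ge> 0 \<and> \<beta> > 0 \<and> loewner_le (betaI \<beta>) (M - \<alpha> *\<^sub>R N)"
proof -
  define D where "D = blk22 N"
  have D_sym: "transpose D = D"
    unfolding D_def using symmetric_blocks(2)[OF N_sym] .
  have D_nsd: "loewner_le D 0" and ker: "\<And>v. D *v v = 0 \<Longrightarrow> blk12 N *v v = 0"
    using \<open>N \<in> PiSet\<close> unfolding PiSet_def D_def by auto
  obtain K where "blk21 N = D ** K" "blk12 N = transpose K ** D" "blk11 N = transpose K ** D ** K"
    using schur_zero_block_factorization[OF N_sym ker \<open>schur N = 0\<close>[unfolded D_def]] D_def by blast
  then have fac: "\<And>x y. y \<bullet> (N *v x) = shear K y \<bullet> (D *v shear K x)"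
    unfolding D_def by (rule block_factorization_form)
  note pos = form_positive_on_shifted_kernel[OF fac incl]
  have N_ker: "N *v vinr v = 0" if "D *v v = 0" for v
    using fac[of "N *v vinr v" "vinr v"] that by (simp add: shear_def)
  define C where "C = {x :: real^('q + 'r). norm x = 1 \<and> (\<forall>k. D *v k = 0 \<longrightarrow> vlower x \<bullet> k = 0)}"
  have "vinr k \<bullet> x = vlower x \<bullet> k" for k :: "real^'r" and x :: "real^('q + 'r)"
    by (metis inner_commute inner_vinr)
  then have "C = sphere 0 1 \<inter> (\<Inter>k\<in>{k. D *v k = 0}. {x. vinr k \<bullet> x = 0})"
    by (auto simp: C_def)
  then have "compact C"
    by (simp add: compact_eq_bounded_closed bounded_Int closed_Int closed_INT closed_hyperplane)
  then obtain a where "a \<ge> 1" and bound: "\<And>x. x \<in> C \<Longrightarrow> 1 / a < x \<bullet> (M *v x) - a * (x \<bullet> (N *v x))"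
  proof (rule compact_uniform_positive_combination)
    show "x \<bullet> (N *v x) \<le> 0" for x
      using D_nsd by (simp add: fac loewner_le_zero_iff)
    show "x \<bullet> (N *v x) < 0 \<or> 0 < x \<bullet> (M *v x)" if "x \<in> C" for x
      using that unfolding C_def
      by (intro form_dichotomy_on_kernel_complement[OF D_sym D_nsd fac pos]) auto
  qed (intro continuous_intros | blast)+
  have "loewner_le (betaI (1 / a)) (M - a *\<^sub>R N)"
  proof (rule loewner_le_betaI_of_sphere_bound[OF _ _ D_sym])
    show "transpose M = M" "transpose N = N"
      using M_sym N_sym by (simp_all add: sym_mat_def)
    show "M *v vinr v = 0" if "D *v v = 0" for v
      using kernel_vinr_if_positive_on_shifted_kernel[OF M_sym M22 pos that] .
  qed (use N_ker \<open>a \<ge> 1\<close> bound C_def in auto)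
  then show ?thesis
    using \<open>a \<ge> 1\<close> by (intro exI[of _ a] exI[of _ "1 / a"]) simp
qed

lemma shifted_betaI_sufficiency:
  fixes M N :: "real^('q::finite + 'r::finite)^('q + 'r)"
  assumes "\<beta> > 0" and L: "loewner_le (betaI \<beta>) (M - \<alpha> *\<^sub>R N)"
  shows "Zzero N \<subseteq> Zplus M"
proof
  fix Z assume Z: "Z \<in> Zzero N"
  show "Z \<in> Zplus M"
    unfolding Zplus_def pd_def
  proof (intro CollectI allI impI)
    fix y :: "real^'q" assume "y \<noteq> 0"
    define x where "x = stackIZ Z *v y"
    have "x \<bullet> (N *v x) = 0"
      using Z unfolding Zzero_def x_def by (simp add: congruence_form[symmetric])
    moreover have "0 \<le> x \<bullet> ((M - \<alpha> *\<^sub>R N - betaI \<beta>) *v x)"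
      using L unfolding loewner_le_def psd_def by blast
    ultimately have "\<beta> * (y \<bullet> y) \<le> x \<bullet> (M *v x)"
      by (simp add: matrix_vector_mult_diff_rdistrib inner_diff_right betaI_form
          scaleR_matrix_vector_assoc[symmetric] x_def stackIZ_mult)
    moreover have "0 < \<beta> * (y \<bullet> y)"
      using \<open>\<beta> > 0\<close> \<open>y \<noteq> 0\<close> by simp
    ultimately show "0 < y \<bullet> ((transpose (stackIZ Z) ** M ** stackIZ Z) *v y)"
      by (simp add: congruence_form x_def)
  qed
qed

theorem mainTheorem12:
  fixes M N :: "real^('q::finite + 'r::finite)^('q + 'r)"
  assumes "sym_mat M" and "sym_mat N"
  shows "((\<exists>\<alpha>::real. \<exists>\<beta>::real. \<beta> > 0 \<and> loewner_le (betaI \<beta>) (M - \<alpha> *\<^sub>R N))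
            \<longrightarrow> Zzero N \<subseteq> Zplus M)
       \<and> ((N \<in> PiSet \<and> schur N = 0 \<and> loewner_le (blk22 M) 0) \<longrightarrow>
            (Zzero N \<subseteq> Zplus M \<longleftrightarrow>
              (\<exists>\<alpha>::real. \<exists>\<beta>::real. \<alpha> \<ge> 0 \<and> \<beta> > 0 \<and> loewner_le (betaI \<beta>) (M - \<alpha> *\<^sub>R N))))"
  using shifted_betaI_sufficiency schur_zero_necessity[OF assms] by blast

end
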